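(* For every positive integer $n$, the poset $\widetilde\Pi(D_n)$ is a lattice.
   Context: For a positive integer $n$, $D_n=\langle r,s\mid r^n=e,\ s^2=e,\ srs^{-1}=r^{-1}\rangle$ is the dihedral group of order $2n$. For a finite group $G$ and a subgroup $H\le G$, let $\pi_e(H)=\{o(x)\mid x\in H\}$. Let $\mathcal{L}(G)$ be the set of subgroups of $G$; define $H_1\equiv H_2$ iff $\pi_e(H_1)=\pi_e(H_2)$, with class $[H]$. The poset $\widetilde\Pi(G)$ is $\mathcal{L}(G)/\!\equiv$ ordered by $[H_1]\lesssim[H_2]$ iff $\pi_e(H_1)\subseteq\pi_e(H_2)$. *)

theory Defs
  imports "HOL-Algebra.Algebra"
begin

text \<open>Concrete model of the dihedral group D_n of order 2n: the pair (k, b) stands for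
  r^k s^b with 0 \<le> k < n. Using s r^c = r^(-c) s, we get
  r^a s^b \<cdot> r^c s^d = r^(a + (-1)^b c) s^(b+d).\<close>

definition dihedral :: "nat \<Rightarrow> (nat \<times> bool) monoid" where
  "dihedral n = \<lparr> carrier = {0..<n} \<times> UNIV,
     monoid.mult = (\<lambda>(a, b) (c, d). ((if b then a + (n - c) else a + c) mod n, b \<noteq> d)),
     monoid.one = (0, False) \<rparr>"

definition elem_orders :: "('a, 'b) monoid_scheme \<Rightarrow> 'a set \<Rightarrow> nat set" where
  "elem_orders G H = group.ord G ` H"

definition pe_class :: "('a, 'b) monoid_scheme \<Rightarrow> 'a set \<Rightarrow> 'a set set" where
  "pe_class G H = {K. subgroup K G \<and> elem_orders G K = elem_orders G H}"

definition Pi_tilde :: "('a, 'b) monoid_scheme \<Rightarrow> 'a set set gorder" where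
  "Pi_tilde G = \<lparr> carrier = {pe_class G H | H. subgroup H G},
     eq = (=),
     le = (\<lambda>A B. \<exists>H\<in>A. \<exists>K\<in>B. elem_orders G H \<subseteq> elem_orders G K) \<rparr>"

end

theory Submission
  imports Defs
begin

(*
  Every element of D_n outside the cyclic rotation subgroup C_n is a reflection, of order 2, so
  pi_e(H) = pi_e(H \<inter> C_n), with 2 added iff H contains a reflection. In a finite cyclic group two
  elements of the same order generate each other, hence
  pi_e(H \<inter> C_n) \<inter> pi_e(K \<inter> C_n) = pi_e(H \<inter> K \<inter> C_n); adjoining all reflections over H \<inter> K \<inter> C_n
  when 2 lies in both pi_e(H) and pi_e(K) shows that the sets pi_e(H) are closed under
  intersection. Thus tilde-Pi(D_n) is a finite meet-semilattice with a top element, and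
  therefore a lattice: the join of x and y is the meet of all common upper bounds.
*)

lemma (in lower_semilattice) lattice_if_finite_with_top:
  assumes "finite (carrier L)" and "t \<in> carrier L" and "\<And>x. x \<in> carrier L \<Longrightarrow> x \<sqsubseteq> t"
  shows "lattice L"
proof (intro lattice.intro upper_semilattice.intro upper_semilattice_axioms.intro)
  show "partial_order L" ..
  show "lower_semilattice L" ..
  fix x y assume xy: "x \<in> carrier L" "y \<in> carrier L"
  let ?U = "Upper L {x, y}"
  have U: "finite ?U" "?U \<subseteq> carrier L" "t \<in> ?U"
    using assms xy by (auto intro: rev_finite_subset Upper_memI)
  then have glb: "greatest L (\<Sqinter>?U) (Lower L ?U)"
    by (intro finite_inf_greatest) auto
  have "x \<in> Lower L ?U" "y \<in> Lower L ?U"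
    using xy by (auto intro: Lower_memI)
  then have "\<Sqinter>?U \<in> ?U"
    using glb xy by (auto intro!: Upper_memI simp: greatest_def Lower_def)
  then have "least L (\<Sqinter>?U) ?U"
    using glb U(2) unfolding least_def greatest_def Lower_def by blast
  then show "\<exists>s. least L s ?U" ..
qed

lemma elem_orders_mono: "H \<subseteq> K \<Longrightarrow> elem_orders G H \<subseteq> elem_orders G K"
  by (auto simp: elem_orders_def)

lemma carrier_Pi_tilde: "carrier (Pi_tilde G) = {pe_class G H | H. subgroup H G}"
  by (simp add: Pi_tilde_def)

lemma eq_Pi_tilde: "x .=\<^bsub>Pi_tilde G\<^esub> y \<longleftrightarrow> x = y"
  by (simp add: Pi_tilde_def)

lemma pe_class_eq_iff:
  assumes "subgroup H G" and "subgroup K G"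
  shows "pe_class G H = pe_class G K \<longleftrightarrow> elem_orders G H = elem_orders G K"
  using assms by (auto simp: pe_class_def)

lemma pe_class_le_iff:
  assumes "subgroup H G" and "subgroup K G"
  shows "pe_class G H \<sqsubseteq>\<^bsub>Pi_tilde G\<^esub> pe_class G K \<longleftrightarrow> elem_orders G H \<subseteq> elem_orders G K"
  using assms by (auto simp: Pi_tilde_def pe_class_def)

lemma partial_order_Pi_tilde: "partial_order (Pi_tilde G)"
proof
  fix x y z
  assume "x \<in> carrier (Pi_tilde G)" "y \<in> carrier (Pi_tilde G)" "z \<in> carrier (Pi_tilde G)"
  then obtain H K M where "subgroup H G" "subgroup K G" "subgroup M G"
    and "x = pe_class G H" "y = pe_class G K" "z = pe_class G M"
    by (auto simp: carrier_Pi_tilde)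
  then show "x \<sqsubseteq>\<^bsub>Pi_tilde G\<^esub> x"
    and "x \<sqsubseteq>\<^bsub>Pi_tilde G\<^esub> y \<Longrightarrow> y \<sqsubseteq>\<^bsub>Pi_tilde G\<^esub> x \<Longrightarrow> x .=\<^bsub>Pi_tilde G\<^esub> y"
    and "x \<sqsubseteq>\<^bsub>Pi_tilde G\<^esub> y \<Longrightarrow> y \<sqsubseteq>\<^bsub>Pi_tilde G\<^esub> z \<Longrightarrow> x \<sqsubseteq>\<^bsub>Pi_tilde G\<^esub> z"
    by (auto simp: pe_class_le_iff pe_class_eq_iff eq_Pi_tilde)
qed (simp_all add: Pi_tilde_def)

lemma lower_semilattice_Pi_tilde:
  assumes elem_orders_Int: "\<And>H K. subgroup H G \<Longrightarrow> subgroup K G \<Longrightarrow>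
      \<exists>L. subgroup L G \<and> elem_orders G L = elem_orders G H \<inter> elem_orders G K"
  shows "lower_semilattice (Pi_tilde G)"
proof (intro lower_semilattice.intro lower_semilattice_axioms.intro partial_order_Pi_tilde)
  fix x y assume "x \<in> carrier (Pi_tilde G)" "y \<in> carrier (Pi_tilde G)"
  then obtain H K where H: "subgroup H G" "x = pe_class G H" and K: "subgroup K G" "y = pe_class G K"
    by (auto simp: carrier_Pi_tilde)
  obtain L where L: "subgroup L G" "elem_orders G L = elem_orders G H \<inter> elem_orders G K"
    using elem_orders_Int H K by blast
  have "greatest (Pi_tilde G) (pe_class G L) (Lower (Pi_tilde G) {x, y})"
  proof (rule greatest_LowerI)
    fix z assume "z \<in> Lower (Pi_tilde G) {x, y}"
    then obtain M where "subgroup M G" "z = pe_class G M"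
      "pe_class G M \<sqsubseteq>\<^bsub>Pi_tilde G\<^esub> x" "pe_class G M \<sqsubseteq>\<^bsub>Pi_tilde G\<^esub> y"
      using H K by (auto simp: Lower_def carrier_Pi_tilde)
    then show "z \<sqsubseteq>\<^bsub>Pi_tilde G\<^esub> pe_class G L"
      using H K L by (simp add: pe_class_le_iff)
  qed (use H K L in \<open>auto simp: pe_class_le_iff carrier_Pi_tilde\<close>)
  then show "\<exists>s. greatest (Pi_tilde G) s (Lower (Pi_tilde G) {x, y})" ..
qed

lemma finite_carrier_Pi_tilde:
  assumes "finite (carrier G)"
  shows "finite (carrier (Pi_tilde G))"
proof (rule finite_subset)
  show "carrier (Pi_tilde G) \<subseteq> Pow (Pow (carrier G))"
    by (auto simp: carrier_Pi_tilde pe_class_def dest: subgroup.subset)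
qed (use assms in simp)

lemma lattice_Pi_tilde:
  assumes "group G" and "finite (carrier G)"
    and elem_orders_Int: "\<And>H K. subgroup H G \<Longrightarrow> subgroup K G \<Longrightarrow>
      \<exists>L. subgroup L G \<and> elem_orders G L = elem_orders G H \<inter> elem_orders G K"
  shows "lattice (Pi_tilde G)"
proof -
  interpret lower_semilattice "Pi_tilde G"
    using elem_orders_Int by (rule lower_semilattice_Pi_tilde)
  have G: "subgroup (carrier G) G"
    using assms(1) by (rule group.subgroup_self)
  show ?thesis
  proof (rule lattice_if_finite_with_top)
    show "pe_class G (carrier G) \<in> carrier (Pi_tilde G)"
      using G by (auto simp: carrier_Pi_tilde)
    show "x \<sqsubseteq>\<^bsub>Pi_tilde G\<^esub> pe_class G (carrier G)" if "x \<in> carrier (Pi_tilde G)" for x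
      using that G by (auto simp: carrier_Pi_tilde pe_class_le_iff intro!: elem_orders_mono subgroup.subset)
  qed (use assms(2) finite_carrier_Pi_tilde in blast)
qed

lemma div_gcd_eq_imp_gcd_eq:
  fixes N a b :: nat
  assumes "N \<noteq> 0" and eq: "N div gcd N a = N div gcd N b"
  shows "gcd N a = gcd N b"
proof -
  have "gcd N a * (N div gcd N a) = gcd N b * (N div gcd N b)"
    by simp
  moreover have "N div gcd N b \<noteq> 0"
    using assms(1) by (simp add: div_eq_0_iff gcd_le1_nat not_less)
  ultimately show ?thesis
    using eq mult_right_cancel by metis
qed

lemma (in group) pow_eq_int_pow_if_ord_eq:
  fixes a b :: nat
  assumes g: "g \<in> carrier G" and "ord g \<noteq> 0" and ord_eq: "ord (g [^] a) = ord (g [^] b)"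
  shows "\<exists>j::int. g [^] a = (g [^] b) [^] j"
proof -
  let ?N = "ord g"
  have ord_pow: "ord (g [^] k) = ?N div gcd ?N k" for k :: nat
    using ord_pow_gen[OF g, of k] \<open>?N \<noteq> 0\<close> by simp
  have "gcd ?N a = gcd ?N b"
    using \<open>?N \<noteq> 0\<close> ord_eq unfolding ord_pow by (rule div_gcd_eq_imp_gcd_eq)
  then obtain t where t: "a = gcd ?N b * t"
    by (metis gcd_dvd2 dvdE)
  obtain u v where uv: "u * int b + v * int ?N = int (gcd ?N b)"
    using bezout_int[of "int b" "int ?N"] by (auto simp: gcd.commute)
  have "int ?N dvd int a - int b * (u * int t)"
  proof
    have "int a = (u * int b + v * int ?N) * int t"
      using uv t by simp
    then show "int a - int b * (u * int t) = int ?N * (v * int t)"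
      by (simp add: algebra_simps)
  qed
  then have "(g [^] b) [^] (u * int t) = g [^] a"
    using g by (simp add: int_pow_eq int_pow_pow flip: int_pow_int)
  then show ?thesis
    by metis
qed

lemma carrier_dihedral: "carrier (dihedral n) = {0..<n} \<times> UNIV"
  by (simp add: dihedral_def)

lemma one_dihedral: "\<one>\<^bsub>dihedral n\<^esub> = (0, False)"
  by (simp add: dihedral_def)

lemma mult_dihedral:
  "(a, b) \<otimes>\<^bsub>dihedral n\<^esub> (c, d) = ((if b then a + (n - c) else a + c) mod n, b \<noteq> d)"
  by (simp add: dihedral_def)

lemma snd_mult_dihedral: "snd (x \<otimes>\<^bsub>dihedral n\<^esub> y) = (snd x \<noteq> snd y)"
  by (cases x; cases y) (simp add: mult_dihedral)

lemma int_fst_mult_dihedral: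
  assumes "fst y \<le> n"
  shows "int (fst (x \<otimes>\<^bsub>dihedral n\<^esub> y))
    = (int (fst x) + (if snd x then - int (fst y) else int (fst y))) mod int n"
proof (cases x; cases y)
  fix a b c d assume xy: "x = (a, b)" "y = (c, d)"
  show ?thesis
  proof (cases b)
    case True
    have "int (fst (x \<otimes>\<^bsub>dihedral n\<^esub> y)) = (int a - int c + int n) mod int n"
      using True assms xy by (simp add: mult_dihedral zmod_int of_nat_diff algebra_simps)
    also have "\<dots> = (int a - int c) mod int n"
      by (rule mod_add_self2)
    finally show ?thesis
      using True xy by simp
  qed (simp add: xy mult_dihedral zmod_int)
qed

lemma group_dihedral:
  assumes "0 < n"
  shows "group (dihedral n)"
proof (rule groupI)
  show "\<one>\<^bsub>dihedral n\<^esub> \<in> carrier (dihedral n)"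
    using assms by (simp add: one_dihedral carrier_dihedral)
  show "x \<otimes>\<^bsub>dihedral n\<^esub> y \<in> carrier (dihedral n)"
    if "x \<in> carrier (dihedral n)" "y \<in> carrier (dihedral n)" for x y
    using assms by (cases x; cases y) (simp add: mult_dihedral carrier_dihedral)
  show "x \<otimes>\<^bsub>dihedral n\<^esub> y \<otimes>\<^bsub>dihedral n\<^esub> z = x \<otimes>\<^bsub>dihedral n\<^esub> (y \<otimes>\<^bsub>dihedral n\<^esub> z)"
    if "x \<in> carrier (dihedral n)" "y \<in> carrier (dihedral n)" "z \<in> carrier (dihedral n)" for x y z
  proof -
    have "fst y \<le> n" "fst z \<le> n" "fst (y \<otimes>\<^bsub>dihedral n\<^esub> z) \<le> n"
      using that assms by (cases y; cases z; auto simp: carrier_dihedral mult_dihedral)+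
    then have "int (fst (x \<otimes>\<^bsub>dihedral n\<^esub> y \<otimes>\<^bsub>dihedral n\<^esub> z))
        = int (fst (x \<otimes>\<^bsub>dihedral n\<^esub> (y \<otimes>\<^bsub>dihedral n\<^esub> z)))"
      by (cases "snd x"; cases "snd y")
        (simp_all add: int_fst_mult_dihedral snd_mult_dihedral mod_simps algebra_simps)
    then show ?thesis
      by (auto simp: prod_eq_iff snd_mult_dihedral)
  qed
  show "\<one>\<^bsub>dihedral n\<^esub> \<otimes>\<^bsub>dihedral n\<^esub> x = x" if "x \<in> carrier (dihedral n)" for x
    using that by (cases x) (simp add: mult_dihedral one_dihedral carrier_dihedral)
  show "\<exists>y\<in>carrier (dihedral n). y \<otimes>\<^bsub>dihedral n\<^esub> x = \<one>\<^bsub>dihedral n\<^esub>"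
    if "x \<in> carrier (dihedral n)" for x
  proof (cases x)
    case (Pair a b)
    let ?y = "(if b then a else (n - a) mod n, b)"
    have "?y \<otimes>\<^bsub>dihedral n\<^esub> x = \<one>\<^bsub>dihedral n\<^esub>"
      using that Pair by (cases b) (simp_all add: mult_dihedral one_dihedral carrier_dihedral mod_add_left_eq)
    moreover have "?y \<in> carrier (dihedral n)"
      using that Pair assms by (simp add: carrier_dihedral)
    ultimately show ?thesis ..
  qed
qed

lemma finite_carrier_dihedral: "finite (carrier (dihedral n))"
  by (simp add: carrier_dihedral)

definition dihedral_rotations :: "nat \<Rightarrow> (nat \<times> bool) set" where
  "dihedral_rotations n = {0..<n} \<times> {False}"

context
  fixes n :: nat
  assumes n_pos: "0 < n"
begin

interpretation D: group "dihedral n"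
  using n_pos by (rule group_dihedral)

lemma inv_rotation: "c < n \<Longrightarrow> inv\<^bsub>dihedral n\<^esub> (c, False) = ((n - c) mod n, False)"
  by (intro D.inv_equality) (simp_all add: mult_dihedral one_dihedral carrier_dihedral mod_add_left_eq)

lemma inv_reflection: "a < n \<Longrightarrow> inv\<^bsub>dihedral n\<^esub> (a, True) = (a, True)"
  by (intro D.inv_equality) (simp_all add: mult_dihedral one_dihedral carrier_dihedral)

lemma ord_reflection:
  assumes "a < n"
  shows "D.ord (a, True) = 2"
proof -
  have x: "(a, True) \<in> carrier (dihedral n)"
    using assms by (simp add: carrier_dihedral)
  have "(a, True) [^]\<^bsub>dihedral n\<^esub> (2::nat) = \<one>\<^bsub>dihedral n\<^esub>"
    using assms by (simp add: numeral_2_eq_2 mult_dihedral one_dihedral)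
  then have "D.ord (a, True) dvd 2"
    using x D.pow_eq_id by blast
  moreover have "D.ord (a, True) \<noteq> 1"
    using x D.ord_eq_1 by (simp add: one_dihedral)
  ultimately show ?thesis
    using two_is_prime_nat prime_nat_iff by blast
qed

lemma rotation_generator_pow: "(1 mod n, False) [^]\<^bsub>dihedral n\<^esub> k = (k mod n, False)"
  by (induction k) (simp_all add: one_dihedral mult_dihedral mod_simps)

lemma subgroup_dihedral_rotations: "subgroup (dihedral_rotations n) (dihedral n)"
proof (rule D.subgroupI)
  show "dihedral_rotations n \<subseteq> carrier (dihedral n)"
    by (auto simp: dihedral_rotations_def carrier_dihedral)
  show "dihedral_rotations n \<noteq> {}"
    using n_pos by (auto simp: dihedral_rotations_def)
  fix x y assume "x \<in> dihedral_rotations n" "y \<in> dihedral_rotations n"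
  then show "inv\<^bsub>dihedral n\<^esub> x \<in> dihedral_rotations n"
    and "x \<otimes>\<^bsub>dihedral n\<^esub> y \<in> dihedral_rotations n"
    using n_pos by (auto simp: dihedral_rotations_def inv_rotation mult_dihedral)
qed

lemma elem_orders_dihedral:
  assumes H: "subgroup H (dihedral n)"
  shows "elem_orders (dihedral n) H = elem_orders (dihedral n) (H \<inter> dihedral_rotations n)
    \<union> (if H \<subseteq> dihedral_rotations n then {} else {2})"
proof -
  have "D.ord x = 2" if "x \<in> H" "x \<notin> dihedral_rotations n" for x
    using that subgroup.subset[OF H]
    by (cases x) (auto simp: carrier_dihedral dihedral_rotations_def ord_reflection)
  then show ?thesis
    unfolding elem_orders_def by (auto intro: rev_image_eqI)
qed

lemma rotation_mem_if_ord_eq: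
  assumes K: "subgroup K (dihedral n)" and y: "y \<in> K \<inter> dihedral_rotations n"
    and x: "x \<in> dihedral_rotations n" and ord_eq: "D.ord x = D.ord y"
  shows "x \<in> K"
proof -
  \<comment> \<open>\<open>(1 mod n, False)\<close> generates the rotations; the \<open>mod\<close> only matters for \<open>n = 1\<close>\<close>
  let ?\<rho> = "(1 mod n, False)"
  have \<rho>: "?\<rho> \<in> carrier (dihedral n)"
    using n_pos by (simp add: carrier_dihedral)
  have "x = ?\<rho> [^]\<^bsub>dihedral n\<^esub> fst x" "y = ?\<rho> [^]\<^bsub>dihedral n\<^esub> fst y"
    using x y rotation_generator_pow[of "fst x"] rotation_generator_pow[of "fst y"]
    by (auto simp: dihedral_rotations_def)
  moreover have "D.ord ?\<rho> \<noteq> 0"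
    using D.ord_ge_1[OF finite_carrier_dihedral \<rho>] by simp
  ultimately obtain j :: int where "x = y [^]\<^bsub>dihedral n\<^esub> j"
    using D.pow_eq_int_pow_if_ord_eq[OF \<rho>] ord_eq by metis
  then show ?thesis
    using D.subgroup_int_pow_closed[OF K] y by simp
qed

lemma elem_orders_Int_rotations:
  assumes H: "subgroup H (dihedral n)" and K: "subgroup K (dihedral n)"
  shows "elem_orders (dihedral n) (H \<inter> K \<inter> dihedral_rotations n)
    = elem_orders (dihedral n) (H \<inter> dihedral_rotations n)
      \<inter> elem_orders (dihedral n) (K \<inter> dihedral_rotations n)"
  using rotation_mem_if_ord_eq[OF K] by (fastforce simp: elem_orders_def)

lemma subgroup_rotations_with_reflections:
  assumes R: "subgroup R (dihedral n)" and R_rot: "R \<subseteq> dihedral_rotations n"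
  shows "subgroup {(a, b). (a, False) \<in> R} (dihedral n)"
proof (rule D.subgroupI)
  have R_lt: "(a, False) \<in> R \<Longrightarrow> a < n" for a
    using R_rot by (auto simp: dihedral_rotations_def)
  show "{(a, b). (a, False) \<in> R} \<subseteq> carrier (dihedral n)"
    using R_lt by (auto simp: carrier_dihedral)
  show "{(a, b). (a, False) \<in> R} \<noteq> {}"
    using subgroup.one_closed[OF R] by (auto simp: one_dihedral)
  fix x y
  assume x: "x \<in> {(a, b::bool). (a, False) \<in> R}" and y: "y \<in> {(a, b::bool). (a, False) \<in> R}"
  obtain a b c d where xy: "x = (a, b)" "y = (c, d)" "(a, False) \<in> R" "(c, False) \<in> R"
    using x y by auto
  then have "inv\<^bsub>dihedral n\<^esub> (a, False) \<in> R" "inv\<^bsub>dihedral n\<^esub> (c, False) \<in> R"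
    using subgroup.m_inv_closed[OF R] by blast+
  then show "inv\<^bsub>dihedral n\<^esub> x \<in> {(a, b). (a, False) \<in> R}"
    using xy R_lt by (cases b) (auto simp: inv_reflection inv_rotation)
  have "fst (x \<otimes>\<^bsub>dihedral n\<^esub> y)
      = fst ((a, False) \<otimes>\<^bsub>dihedral n\<^esub> (if b then inv\<^bsub>dihedral n\<^esub> (c, False) else (c, False)))"
    using xy R_lt by (simp add: mult_dihedral inv_rotation mod_add_right_eq)
  moreover have "(a, False) \<otimes>\<^bsub>dihedral n\<^esub> (if b then inv\<^bsub>dihedral n\<^esub> (c, False) else (c, False)) \<in> R"
    using xy \<open>inv\<^bsub>dihedral n\<^esub> (c, False) \<in> R\<close> subgroup.m_closed[OF R] by simp
  ultimately show "x \<otimes>\<^bsub>dihedral n\<^esub> y \<in> {(a, b). (a, False) \<in> R}"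
    using xy R_lt by (cases b) (auto simp: mult_dihedral inv_rotation)
qed

lemma elem_orders_rotations_with_reflections:
  assumes R: "subgroup R (dihedral n)" and R_rot: "R \<subseteq> dihedral_rotations n"
  shows "elem_orders (dihedral n) {(a, b). (a, False) \<in> R} = elem_orders (dihedral n) R \<union> {2}"
proof -
  have "{(a, b). (a, False) \<in> R} \<inter> dihedral_rotations n = R"
    using R_rot by (auto simp: dihedral_rotations_def)
  moreover have "(0, True) \<in> {(a, b). (a, False) \<in> R} - dihedral_rotations n"
    using subgroup.one_closed[OF R] by (simp add: one_dihedral dihedral_rotations_def)
  ultimately show ?thesis
    using elem_orders_dihedral[OF subgroup_rotations_with_reflections[OF assms]] by auto
qed

lemma elem_orders_Int_dihedral:
  assumes H: "subgroup H (dihedral n)" and K: "subgroup K (dihedral n)"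
  shows "\<exists>L. subgroup L (dihedral n) \<and>
    elem_orders (dihedral n) L = elem_orders (dihedral n) H \<inter> elem_orders (dihedral n) K"
proof -
  let ?E = "elem_orders (dihedral n)"
  define R where "R = H \<inter> K \<inter> dihedral_rotations n"
  have R: "subgroup R (dihedral n)" and R_rot: "R \<subseteq> dihedral_rotations n"
    unfolding R_def using H K subgroup_dihedral_rotations by (blast intro: D.subgroups_Inter_pair)+
  have E: "?E H \<inter> ?E K = ?E R \<union> ({2} \<inter> ?E H \<inter> ?E K)"
    using elem_orders_dihedral[OF H] elem_orders_dihedral[OF K] elem_orders_Int_rotations[OF H K]
    unfolding R_def by (auto split: if_splits)
  show ?thesis
  proof (cases "2 \<in> ?E H \<inter> ?E K")
    case True
    then show ?thesis
      using subgroup_rotations_with_reflections[OF R R_rot]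
        elem_orders_rotations_with_reflections[OF R R_rot] E by blast
  next
    case False
    then show ?thesis
      using R E by auto
  qed
qed

end

theorem theorem2p5:
  fixes n :: nat
  assumes "n \<ge> 1"
  shows "lattice (Pi_tilde (dihedral n))"
proof -
  have "0 < n"
    using assms by simp
  then show ?thesis
    using lattice_Pi_tilde group_dihedral finite_carrier_dihedral elem_orders_Int_dihedral
    by blast
qed

end
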